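(* Let $\mathcal{G}$, $u$, $v$ be as in the context, and suppose the weights of the red edges $e$ are independent random variables, each with a probability density function $f_e:(0,\infty)\to[0,\phi_e]$ for some $\phi_e>0$, while green edge weights are fixed. Then for every $0\le r<r_{tot}$ and every $\varepsilon>0$, $$\mathbb{P}\big(\Delta(r)\le r+\varepsilon\big)\le\Big(\sum_{e\text{ red}}\phi_e\Big)\cdot\varepsilon .$$
   Context: $\mathcal{G}=\langle V,E,\omega,\lambda\rangle$ is a finite weighted coloured--edge graph (directed multigraph, weights $\omega:E\to\mathbb{R}^+$, colours $\lambda:E\to M$) with $M=\{\text{red},\text{green}\}$. A path from $u$ to $v$ is a sequence of consecutive edges from $u$ to $v$ visiting no vertex twice; $\omega_{\text{red}}(p)$, $\omega_{\text{green}}(p)$ denote the sums of weights of the red, resp. green, edges of $p$. A path $p$ from $u$ to $v$ is minimal if there is no path $q$ from $u$ to $v$ with $\omega_{\text{red}}(q)\le\omega_{\text{red}}(p)$, $\omega_{\text{green}}(q)\le\omega_{\text{green}}(p)$ and at least one inequality strict. It is assumed there is a path from $u$ to $v$ all of whose edges are green and a path from $u$ to $v$ all of whose edges are red; $r_{tot}$ is the least red weight of a path from $u$ to $v$ all of whose edges are red. For $0\le r<r_{tot}$, $\Delta(r)$ is the least value of $\omega_{\text{red}}(q)$ over all minimal paths $q$ from $u$ to $v$ with $\omega_{\text{red}}(q)>r$. *)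

theory Defs
  imports "HOL-Probability.Probability"
begin

datatype colour = Red | Green

text \<open>A finite directed multigraph: edge set E (of an arbitrary edge type), with
  source and target maps.\<close>

fun walk :: "'e set \<Rightarrow> ('e \<Rightarrow> 'v) \<Rightarrow> ('e \<Rightarrow> 'v) \<Rightarrow> 'v \<Rightarrow> 'v \<Rightarrow> 'e list \<Rightarrow> bool" where
  "walk E src tgt u v [] \<longleftrightarrow> u = v"
| "walk E src tgt u v (e # es) \<longleftrightarrow> e \<in> E \<and> src e = u \<and> walk E src tgt (tgt e) v es"

definition is_path :: "'e set \<Rightarrow> ('e \<Rightarrow> 'v) \<Rightarrow> ('e \<Rightarrow> 'v) \<Rightarrow> 'v \<Rightarrow> 'v \<Rightarrow> 'e list \<Rightarrow> bool" where
  "is_path E src tgt u v p \<longleftrightarrow> walk E src tgt u v p \<and> distinct (u # map tgt p)"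

definition col_weight :: "('e \<Rightarrow> colour) \<Rightarrow> colour \<Rightarrow> ('e \<Rightarrow> real) \<Rightarrow> 'e list \<Rightarrow> real" where
  "col_weight lam c w p = sum_list (map (\<lambda>e. if lam e = c then w e else 0) p)"

definition minimal_path ::
  "'e set \<Rightarrow> ('e \<Rightarrow> 'v) \<Rightarrow> ('e \<Rightarrow> 'v) \<Rightarrow> ('e \<Rightarrow> colour) \<Rightarrow> ('e \<Rightarrow> real) \<Rightarrow> 'v \<Rightarrow> 'v \<Rightarrow> 'e list \<Rightarrow> bool" where
  "minimal_path E src tgt lam w u v p \<longleftrightarrow> is_path E src tgt u v p \<and>
     \<not> (\<exists>q. is_path E src tgt u v q \<and>
            col_weight lam Red w q \<le> col_weight lam Red w p \<and>
            col_weight lam Green w q \<le> col_weight lam Green w p \<and>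
            (col_weight lam Red w q < col_weight lam Red w p \<or>
             col_weight lam Green w q < col_weight lam Green w p))"

definition r_tot ::
  "'e set \<Rightarrow> ('e \<Rightarrow> 'v) \<Rightarrow> ('e \<Rightarrow> 'v) \<Rightarrow> ('e \<Rightarrow> colour) \<Rightarrow> ('e \<Rightarrow> real) \<Rightarrow> 'v \<Rightarrow> 'v \<Rightarrow> real" where
  "r_tot E src tgt lam w u v =
     Min {col_weight lam Red w p | p. is_path E src tgt u v p \<and> (\<forall>e\<in>set p. lam e = Red)}"

definition Delta ::
  "'e set \<Rightarrow> ('e \<Rightarrow> 'v) \<Rightarrow> ('e \<Rightarrow> 'v) \<Rightarrow> ('e \<Rightarrow> colour) \<Rightarrow> ('e \<Rightarrow> real) \<Rightarrow> 'v \<Rightarrow> 'v \<Rightarrow> real \<Rightarrow> real" where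
  "Delta E src tgt lam w u v r =
     Min {col_weight lam Red w q | q. minimal_path E src tgt lam w u v q \<and> col_weight lam Red w q > r}"

end

theory Submission
  imports Defs
begin

(*
  Write R(p), G(p) for the red and green weight of a u-v path p.  The proof has a
  deterministic and a probabilistic half.

  Call a red edge e pivotal for the weights w if there is a path s
  through e whose green weight is below that of every e-avoiding path of red weight at
  most r, which has the least red weight among all such paths through e, and which
  satisfies r < R(s) <= r + eps.  If r < r_tot and Delta(r) <= r + eps (with positive
  green and nonnegative red weights) then some red edge is pivotal: take the minimal path
  q realising Delta(r) and the greenest path p of red weight <= r; q has a red edge e not
  on p, and the red-lightest path beating the e-avoiding paths does the job.

  Whether e is pivotal depends on w e only through a shift of the
  red weights of the paths through e, so for fixed other weights the set of values of
  w e making e pivotal lies in an interval of length eps.  Since w e is independent of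
  the other red weights and has density at most phi e, conditioning on the other
  weights (Fubini) bounds the probability by phi e * eps.  A union bound over the red
  edges, plus the null event that some red weight is nonpositive, gives the theorem.
*)

lemma walk_edges: "walk E src tgt u v p \<Longrightarrow> set p \<subseteq> E"
  by (induction p arbitrary: u) auto

lemma path_edges: "is_path E src tgt u v p \<Longrightarrow> set p \<subseteq> E"
  unfolding is_path_def using walk_edges[of E src tgt u v p] by simp

lemma path_distinct: "is_path E src tgt u v p \<Longrightarrow> distinct p"
  unfolding is_path_def by (auto simp: distinct_map)

lemma finite_paths:
  assumes "finite E"
  shows "finite {p. is_path E src tgt u v p}"
proof -
  have "{p. is_path E src tgt u v p} \<subseteq> {xs. set xs \<subseteq> E \<and> length xs \<le> card E}"
  proof
    fix p assume "p \<in> {p. is_path E src tgt u v p}"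
    then have p: "is_path E src tgt u v p" by simp
    have "length p = card (set p)" using distinct_card[OF path_distinct[OF p]] by simp
    also have "\<dots> \<le> card E" using card_mono[OF assms path_edges[OF p]] .
    finally show "p \<in> {xs. set xs \<subseteq> E \<and> length xs \<le> card E}"
      using path_edges[OF p] by simp
  qed
  then show ?thesis by (rule finite_subset) (rule finite_lists_length_le[OF assms])
qed

lemma finite_minimiser:
  fixes h :: "'a \<Rightarrow> 'b::linorder"
  assumes "finite S" "x \<in> S"
  obtains s where "s \<in> S" "\<And>s'. s' \<in> S \<Longrightarrow> h s \<le> h s'"
proof -
  obtain s where "is_arg_min h (\<lambda>s. s \<in> S) s"
    using ex_is_arg_min_if_finite[of S h] assms by blast
  then show ?thesis using that by (auto simp: is_arg_min_linorder)
qed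

lemma col_weight_cong:
  "(\<And>e. e \<in> set p \<Longrightarrow> w1 e = w2 e) \<Longrightarrow> col_weight lam c w1 p = col_weight lam c w2 p"
  unfolding col_weight_def by (induction p) auto

lemma col_weight_nonneg:
  "(\<And>e. e \<in> set p \<Longrightarrow> lam e = c \<Longrightarrow> 0 \<le> w e) \<Longrightarrow> 0 \<le> col_weight lam c w p"
  unfolding col_weight_def by (induction p) auto

lemma col_weight_eq_0:
  "(\<And>e. e \<in> set p \<Longrightarrow> lam e \<noteq> c) \<Longrightarrow> col_weight lam c w p = 0"
  unfolding col_weight_def by (induction p) auto

lemma col_weight_sum:
  "distinct p \<Longrightarrow> col_weight lam c w p = (\<Sum>e\<in>set p. if lam e = c then w e else 0)"
  unfolding col_weight_def by (rule sum_list_distinct_conv_sum_set)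

lemma col_weight_update:
  "distinct p \<Longrightarrow> col_weight lam c (w(e := x)) p =
     col_weight lam c (w(e := 0)) p + (if lam e = c \<and> e \<in> set p then x else 0)"
  unfolding col_weight_def by (induction p) auto

lemma col_weight_pos:
  assumes "distinct p" "e \<in> set p" "lam e = c" "w e > 0"
    and "\<And>e'. e' \<in> set p \<Longrightarrow> lam e' = c \<Longrightarrow> 0 \<le> w e'"
  shows "col_weight lam c w p > 0"
proof -
  have "0 < (if lam e = c then w e else 0)" using assms(3,4) by simp
  also have "\<dots> \<le> (\<Sum>e\<in>set p. if lam e = c then w e else 0)"
    using assms(2,5) by (intro member_le_sum) auto
  finally show ?thesis using col_weight_sum[OF assms(1)] by simp
qed

lemma col_weight_mono_edges:
  assumes "distinct p" "distinct q" "{e \<in> set q. lam e = c} \<subseteq> set p"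
    and "\<And>e. e \<in> set p \<Longrightarrow> lam e = c \<Longrightarrow> 0 \<le> w e"
  shows "col_weight lam c w q \<le> col_weight lam c w p"
proof -
  let ?h = "\<lambda>e. if lam e = c then w e else 0"
  have "col_weight lam c w q = sum ?h {e \<in> set q. lam e = c}"
    using col_weight_sum[OF assms(2)] by (simp add: sum.inter_filter)
  also have "\<dots> \<le> sum ?h (set p)"
    using assms(3,4) by (intro sum_mono2) auto
  also have "\<dots> = col_weight lam c w p" using col_weight_sum[OF assms(1)] by simp
  finally show ?thesis .
qed

(* The notions below are stated for an abstract family P of paths with red and green weight
   functions R and G, so that they can be reused for measurability. *)
definition green_beats ::
  "'e list set \<Rightarrow> 'e \<Rightarrow> ('e list \<Rightarrow> real) \<Rightarrow> ('e list \<Rightarrow> real) \<Rightarrow> real \<Rightarrow> 'e list \<Rightarrow> bool" where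
  "green_beats P e R G r s \<longleftrightarrow> e \<in> set s \<and> (\<forall>t\<in>P. e \<notin> set t \<longrightarrow> R t \<le> r \<longrightarrow> G s < G t)"

definition pivotal ::
  "'e list set \<Rightarrow> 'e \<Rightarrow> ('e list \<Rightarrow> real) \<Rightarrow> ('e list \<Rightarrow> real) \<Rightarrow> real \<Rightarrow> real \<Rightarrow> bool" where
  "pivotal P e R G r \<epsilon> \<longleftrightarrow>
     (\<exists>s\<in>P. green_beats P e R G r s \<and> r < R s \<and> R s \<le> r + \<epsilon> \<and>
        (\<forall>s'\<in>P. green_beats P e R G r s' \<longrightarrow> R s \<le> R s'))"

abbreviation pivotal_edge ::
  "'e set \<Rightarrow> ('e \<Rightarrow> 'v) \<Rightarrow> ('e \<Rightarrow> 'v) \<Rightarrow> ('e \<Rightarrow> colour) \<Rightarrow> 'v \<Rightarrow> 'v \<Rightarrow> real \<Rightarrow> real \<Rightarrow> 'e \<Rightarrow> ('e \<Rightarrow> real) \<Rightarrow> bool" where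
  "pivotal_edge E src tgt lam u v r \<epsilon> e w \<equiv>
     pivotal {p. is_path E src tgt u v p} e (col_weight lam Red w) (col_weight lam Green w) r \<epsilon>"

lemma pivotal_cong:
  assumes "\<And>p. p \<in> P \<Longrightarrow> R1 p = R2 p" "\<And>p. p \<in> P \<Longrightarrow> G1 p = G2 p"
  shows "pivotal P e R1 G1 r \<epsilon> \<longleftrightarrow> pivotal P e R2 G2 r \<epsilon>"
proof -
  have gb: "green_beats P e R1 G1 r s \<longleftrightarrow> green_beats P e R2 G2 r s" if "s \<in> P" for s
    using assms that unfolding green_beats_def by auto
  show ?thesis unfolding pivotal_def
  proof (rule bex_cong[OF refl])
    fix s assume s: "s \<in> P"
    have "(\<forall>s'\<in>P. green_beats P e R1 G1 r s' \<longrightarrow> R1 s \<le> R1 s') \<longleftrightarrow>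
          (\<forall>s'\<in>P. green_beats P e R2 G2 r s' \<longrightarrow> R2 s \<le> R2 s')"
      by (rule ball_cong[OF refl]) (simp add: gb assms s)
    then show "green_beats P e R1 G1 r s \<and> r < R1 s \<and> R1 s \<le> r + \<epsilon> \<and>
          (\<forall>s'\<in>P. green_beats P e R1 G1 r s' \<longrightarrow> R1 s \<le> R1 s') \<longleftrightarrow>
        green_beats P e R2 G2 r s \<and> r < R2 s \<and> R2 s \<le> r + \<epsilon> \<and>
          (\<forall>s'\<in>P. green_beats P e R2 G2 r s' \<longrightarrow> R2 s \<le> R2 s')"
      using gb[OF s] assms(1)[OF s] by simp
  qed
qed

lemma pivotal_edge_cong:
  assumes "\<And>e'. e' \<in> E \<Longrightarrow> w1 e' = w2 e'"
  shows "pivotal_edge E src tgt lam u v r \<epsilon> e w1 \<longleftrightarrow> pivotal_edge E src tgt lam u v r \<epsilon> e w2"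
  using assms by (intro pivotal_cong col_weight_cong) (auto dest!: path_edges)

lemma minimal_path_is_path: "minimal_path E src tgt lam w u v q \<Longrightarrow> is_path E src tgt u v q"
  unfolding minimal_path_def by simp

lemma minimal_path_greener:
  assumes "minimal_path E src tgt lam w u v q" "is_path E src tgt u v t"
    and "col_weight lam Red w t < col_weight lam Red w q"
  shows "col_weight lam Green w q < col_weight lam Green w t"
proof (rule ccontr)
  assume "\<not> ?thesis"
  then have "col_weight lam Green w t \<le> col_weight lam Green w q" by simp
  moreover have "col_weight lam Red w t \<le> col_weight lam Red w q" using assms(3) by simp
  ultimately have "\<exists>q'. is_path E src tgt u v q' \<and>
      col_weight lam Red w q' \<le> col_weight lam Red w q \<and> col_weight lam Green w q' \<le> col_weight lam Green w q \<and>
      (col_weight lam Red w q' < col_weight lam Red w q \<or> col_weight lam Green w q' < col_weight lam Green w q)"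
    using assms(2,3) by blast
  then show False using assms(1) unfolding minimal_path_def by blast
qed

(* With positive green weights, an all-red path of least red weight r_tot is minimal:
   exactly the all-red paths have green weight 0. *)
lemma cheapest_red_path_minimal:
  assumes finE: "finite E"
    and red_path: "\<exists>p. is_path E src tgt u v p \<and> (\<forall>e\<in>set p. lam e = Red)"
    and green_pos: "\<forall>e\<in>E. lam e = Green \<longrightarrow> w e > 0"
  shows "\<exists>p. minimal_path E src tgt lam w u v p \<and> col_weight lam Red w p = r_tot E src tgt lam w u v"
proof -
  let ?P = "{p. is_path E src tgt u v p}"
  let ?R = "col_weight lam Red w" and ?G = "col_weight lam Green w"
  let ?A = "{p\<in>?P. \<forall>e\<in>set p. lam e = Red}"
  have G_zero_iff: "?G p = 0 \<longleftrightarrow> (\<forall>e\<in>set p. lam e = Red)" if p: "p \<in> ?P" for p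
  proof
    assume G0: "?G p = 0"
    show "\<forall>e\<in>set p. lam e = Red"
    proof (rule ballI, rule ccontr)
      fix e assume e: "e \<in> set p" "lam e \<noteq> Red"
      then have "lam e = Green" by (cases "lam e") auto
      then have "?G p > 0"
        using p e green_pos path_edges[of E src tgt u v p]
        by (intro col_weight_pos[OF path_distinct]) auto
      then show False using G0 by simp
    qed
  qed (auto intro: col_weight_eq_0)
  have G_nonneg: "0 \<le> ?G p" if "p \<in> ?P" for p
    using that green_pos path_edges[of E src tgt u v p] by (intro col_weight_nonneg) auto
  have finA: "finite ?A" by (rule finite_subset[OF _ finite_paths[OF finE]]) auto
  obtain p0 where p0: "p0 \<in> ?A" "\<And>s. s \<in> ?A \<Longrightarrow> ?R p0 \<le> ?R s"
    using red_path finite_minimiser[OF finA, of _ ?R] by blast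
  have "r_tot E src tgt lam w u v = ?R p0"
    unfolding r_tot_def using p0 finA by (intro Min_eqI) (auto simp: setcompr_eq_image)
  moreover have "minimal_path E src tgt lam w u v p0"
    unfolding minimal_path_def
  proof (intro conjI notI)
    show "is_path E src tgt u v p0" using p0 by simp
    assume "\<exists>q. is_path E src tgt u v q \<and> ?R q \<le> ?R p0 \<and> ?G q \<le> ?G p0 \<and> (?R q < ?R p0 \<or> ?G q < ?G p0)"
    then obtain q where q: "q \<in> ?P" "?R q \<le> ?R p0" "?G q \<le> ?G p0" "?R q < ?R p0 \<or> ?G q < ?G p0"
      by blast
    have "?G p0 = 0" using p0(1) G_zero_iff by blast
    then have "?G q = 0" using q(1,3) G_nonneg[of q] by linarith
    then have "q \<in> ?A" using q(1) G_zero_iff by blast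
    then have "?R p0 \<le> ?R q" using p0(2) by blast
    then show False using q(2,4) \<open>?G p0 = 0\<close> \<open>?G q = 0\<close> by linarith
  qed
  ultimately show ?thesis by auto
qed

lemma Delta_attained:
  assumes finE: "finite E"
    and p: "minimal_path E src tgt lam w u v p" "r < col_weight lam Red w p"
  shows "\<exists>q. minimal_path E src tgt lam w u v q \<and> r < col_weight lam Red w q \<and>
             col_weight lam Red w q = Delta E src tgt lam w u v r"
proof -
  let ?D = "{q. minimal_path E src tgt lam w u v q \<and> r < col_weight lam Red w q}"
  have "?D \<subseteq> {p. is_path E src tgt u v p}" by (auto dest: minimal_path_is_path)
  then have "finite (col_weight lam Red w ` ?D)"
    by (intro finite_imageI finite_subset[OF _ finite_paths[OF finE]])
  moreover have "?D \<noteq> {}" using p by blast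
  ultimately have "Delta E src tgt lam w u v r \<in> col_weight lam Red w ` ?D"
    unfolding Delta_def by (simp add: setcompr_eq_image Min_in)
  then show ?thesis by auto
qed

(* If a path q through e beats the e-avoiding paths and has red weight at most r + eps, and
   some e-avoiding path p is the greenest among the paths of red weight at most r, then e is
   pivotal: the red-lightest path s beating the e-avoiding paths is greener than p, so s cannot
   have red weight at most r. *)
lemma pivotal_if_beats:
  assumes finP: "finite P"
    and q: "q \<in> P" "green_beats P e R G r q" "R q \<le> r + \<epsilon>"
    and p: "p \<in> P" "e \<notin> set p" "R p \<le> r" "\<And>t. t \<in> P \<Longrightarrow> R t \<le> r \<Longrightarrow> G p \<le> G t"
  shows "pivotal P e R G r \<epsilon>"
proof -
  let ?C = "{s \<in> P. green_beats P e R G r s}"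
  have finC: "finite ?C" using finP by simp
  obtain s where s: "s \<in> ?C" "\<And>s'. s' \<in> ?C \<Longrightarrow> R s \<le> R s'"
    using finite_minimiser[OF finC, of q R] q(1,2) by blast
  have "R s \<le> r + \<epsilon>" using s(2)[of q] q by simp
  moreover have "r < R s"
  proof (rule ccontr)
    assume "\<not> r < R s"
    then have "G p \<le> G s" using s(1) p(4) by simp
    moreover have "G s < G p" using s(1) p(1-3) unfolding green_beats_def by blast
    ultimately show False by simp
  qed
  ultimately show ?thesis unfolding pivotal_def using s by blast
qed

(* Let p be the greenest path of red weight <= r; q is greener than p, hence has a
   red edge e off p, and q beats the e-avoiding paths of red weight at most r. *)
lemma pivotal_edge_exists:
  assumes finE: "finite E"
    and green_path: "\<exists>p. is_path E src tgt u v p \<and> (\<forall>e\<in>set p. lam e = Green)"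
    and red_nonneg: "\<forall>e\<in>E. lam e = Red \<longrightarrow> 0 \<le> w e"
    and r_nonneg: "0 \<le> r"
    and q: "minimal_path E src tgt lam w u v q"
      "r < col_weight lam Red w q" "col_weight lam Red w q \<le> r + \<epsilon>"
  shows "\<exists>e\<in>set q. lam e = Red \<and> pivotal_edge E src tgt lam u v r \<epsilon> e w"
proof -
  let ?P = "{p. is_path E src tgt u v p}"
  let ?R = "col_weight lam Red w" and ?G = "col_weight lam Green w"
  let ?T = "{t \<in> ?P. ?R t \<le> r}"
  have qP: "q \<in> ?P" using minimal_path_is_path[OF q(1)] by simp
  have finT: "finite ?T" by (rule finite_subset[OF _ finite_paths[OF finE]]) auto
  obtain pg where pg: "pg \<in> ?P" "\<forall>e\<in>set pg. lam e = Green" using green_path by blast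
  have "?R pg = 0" using pg(2) by (intro col_weight_eq_0) auto
  then have "pg \<in> ?T" using pg(1) r_nonneg by simp
  then obtain p where p: "p \<in> ?T" "\<And>t. t \<in> ?T \<Longrightarrow> ?G p \<le> ?G t"
    using finite_minimiser[OF finT, of pg ?G] by blast
  have q_greener: "?G q < ?G t" if "t \<in> ?T" for t
    using minimal_path_greener[OF q(1)] that q(2) by fastforce
  have "\<not> {e \<in> set q. lam e = Red} \<subseteq> set p"
  proof
    assume "{e \<in> set q. lam e = Red} \<subseteq> set p"
    then have "?R q \<le> ?R p"
      using p(1) qP red_nonneg path_edges[of E src tgt u v p]
      by (intro col_weight_mono_edges path_distinct) auto
    then show False using p(1) q(2) by simp
  qed
  then obtain e where e: "e \<in> set q" "lam e = Red" "e \<notin> set p" by blast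
  have "green_beats ?P e ?R ?G r q" using e(1) q_greener unfolding green_beats_def by auto
  moreover have "p \<in> ?P" "?R p \<le> r" "\<And>t. t \<in> ?P \<Longrightarrow> ?R t \<le> r \<Longrightarrow> ?G p \<le> ?G t"
    using p by auto
  ultimately have "pivotal_edge E src tgt lam u v r \<epsilon> e w"
    using pivotal_if_beats[where R = ?R and G = ?G, OF finite_paths[OF finE] qP _ q(3) _ e(3)] by blast
  then show ?thesis using e by blast
qed

lemma pivotal_edge_if_Delta_small:
  assumes finE: "finite E"
    and green_path: "\<exists>p. is_path E src tgt u v p \<and> (\<forall>e\<in>set p. lam e = Green)"
    and red_path: "\<exists>p. is_path E src tgt u v p \<and> (\<forall>e\<in>set p. lam e = Red)"
    and green_pos: "\<forall>e\<in>E. lam e = Green \<longrightarrow> w e > 0"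
    and red_nonneg: "\<forall>e\<in>E. lam e = Red \<longrightarrow> 0 \<le> w e"
    and r_nonneg: "0 \<le> r"
    and r_less: "r < r_tot E src tgt lam w u v"
    and Delta_le: "Delta E src tgt lam w u v r \<le> r + \<epsilon>"
  shows "\<exists>e\<in>E. lam e = Red \<and> pivotal_edge E src tgt lam u v r \<epsilon> e w"
proof -
  obtain p0 where "minimal_path E src tgt lam w u v p0" "r < col_weight lam Red w p0"
    using cheapest_red_path_minimal[OF finE red_path green_pos] r_less by auto
  then obtain q where q: "minimal_path E src tgt lam w u v q" "r < col_weight lam Red w q"
      "col_weight lam Red w q \<le> r + \<epsilon>"
    using Delta_attained[OF finE] Delta_le by metis
  obtain e where "e \<in> set q" "lam e = Red" "pivotal_edge E src tgt lam u v r \<epsilon> e w"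
    using pivotal_edge_exists[OF finE green_path red_nonneg r_nonneg q] by blast
  then show ?thesis using path_edges[OF minimal_path_is_path[OF q(1)]] by blast
qed

lemma red_edge_nonpos_or_pivotal:
  fixes x g :: "'e \<Rightarrow> real" and lam :: "'e \<Rightarrow> colour"
  defines "w \<equiv> \<lambda>e. if lam e = Red then x e else g e"
  assumes finE: "finite E"
    and green_path: "\<exists>p. is_path E src tgt u v p \<and> (\<forall>e\<in>set p. lam e = Green)"
    and red_path: "\<exists>p. is_path E src tgt u v p \<and> (\<forall>e\<in>set p. lam e = Red)"
    and green_pos: "\<forall>e\<in>E. lam e = Green \<longrightarrow> g e > 0"
    and r_nonneg: "0 \<le> r"
    and r_less: "r < r_tot E src tgt lam w u v"
    and Delta_le: "Delta E src tgt lam w u v r \<le> r + \<epsilon>"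
  shows "\<exists>e\<in>E. lam e = Red \<and> (x e \<le> 0 \<or> pivotal_edge E src tgt lam u v r \<epsilon> e w)"
proof (cases "\<exists>e\<in>E. lam e = Red \<and> x e \<le> 0")
  case False
  then have "\<forall>e\<in>E. lam e = Red \<longrightarrow> 0 \<le> w e" by (auto simp: w_def)
  moreover have "\<forall>e\<in>E. lam e = Green \<longrightarrow> 0 < w e" using green_pos by (auto simp: w_def)
  ultimately show ?thesis
    using pivotal_edge_if_Delta_small[OF finE green_path red_path _ _ r_nonneg r_less Delta_le] by blast
qed blast

lemma green_beats_shift:
  "green_beats P e (\<lambda>p. c p + (if e \<in> set p then x else 0)) G r s \<longleftrightarrow> green_beats P e c G r s"
  unfolding green_beats_def by auto

lemma pivotal_shift:
  assumes finP: "finite P"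
    and piv: "pivotal P e (\<lambda>p. c p + (if e \<in> set p then x else 0)) G r \<epsilon>"
  defines "m \<equiv> Min (c ` {s \<in> P. green_beats P e c G r s})"
  shows "r - m < x \<and> x \<le> r - m + \<epsilon>"
proof -
  obtain s where s: "s \<in> P" "green_beats P e c G r s" "r < c s + x" "c s + x \<le> r + \<epsilon>"
      "\<And>s'. s' \<in> P \<Longrightarrow> green_beats P e c G r s' \<Longrightarrow> c s \<le> c s'"
    using piv unfolding pivotal_def green_beats_shift
    by (fastforce simp: green_beats_def)
  have "m = c s"
    unfolding m_def using s(1,2,5) finP by (intro Min_eqI) auto
  then show ?thesis using s(3,4) by simp
qed

lemma pivotal_edge_slice:
  assumes finE: "finite E" and red: "lam e = Red"
  shows "\<exists>a. \<forall>x. pivotal_edge E src tgt lam u v r \<epsilon> e (w(e := x)) \<longrightarrow> a < x \<and> x \<le> a + \<epsilon>"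
proof -
  let ?P = "{p. is_path E src tgt u v p}"
  let ?c = "col_weight lam Red (w(e := 0))" and ?G = "col_weight lam Green w"
  have "pivotal_edge E src tgt lam u v r \<epsilon> e (w(e := x)) \<longleftrightarrow>
        pivotal ?P e (\<lambda>p. ?c p + (if e \<in> set p then x else 0)) ?G r \<epsilon>" for x
  proof (rule pivotal_cong)
    fix p assume "p \<in> ?P"
    then have d: "distinct p" by (simp add: path_distinct)
    show "col_weight lam Red (w(e := x)) p = ?c p + (if e \<in> set p then x else 0)"
      using col_weight_update[OF d, of lam Red w e x] red by simp
    show "col_weight lam Green (w(e := x)) p = ?G p"
      using col_weight_update[OF d, of lam Green w e x] col_weight_update[OF d, of lam Green w e "w e"] red
      by simp
  qed
  then show ?thesis
    using pivotal_shift[OF finite_paths[OF finE], of src tgt u v e ?c _ ?G r \<epsilon>] by blast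
qed

lemma distributed_emeasure_le:
  assumes dens: "distributed M lborel Z (\<lambda>x. ennreal (f x))"
    and A: "A \<in> sets borel" and f_le: "\<And>x. x \<in> A \<Longrightarrow> f x \<le> \<phi>"
  shows "emeasure M (Z -` A \<inter> space M) \<le> ennreal \<phi> * emeasure lborel A"
proof -
  have "emeasure M (Z -` A \<inter> space M) = (\<integral>\<^sup>+x. ennreal (f x) * indicator A x \<partial>lborel)"
    using A by (intro distributed_emeasure[OF dens]) simp
  also have "\<dots> \<le> (\<integral>\<^sup>+x. ennreal \<phi> * indicator A x \<partial>lborel)"
    using f_le by (intro nn_integral_mono) (auto simp: indicator_def intro: ennreal_leI)
  also have "\<dots> = ennreal \<phi> * emeasure lborel A"
    using A by (simp add: nn_integral_cmult_indicator)
  finally show ?thesis .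
qed

lemma (in prob_space) indep_slice_bound:
  fixes Y Z :: "'a \<Rightarrow> 'y" and h :: "'y \<Rightarrow> real"
  assumes ind: "indep_var N Y K Z"
    and dens: "distributed M lborel (\<lambda>\<omega>. h (Z \<omega>)) (\<lambda>x. ennreal (f x))"
    and f_le: "\<And>x. f x \<le> \<phi>"
    and S: "S \<in> sets (N \<Otimes>\<^sub>M K)"
    and slice: "\<And>y. y \<in> space N \<Longrightarrow> \<exists>a. \<forall>z\<in>space K. (y, z) \<in> S \<longrightarrow> a < h z \<and> h z \<le> a + \<epsilon>"
    and eps: "0 \<le> \<epsilon>"
  shows "emeasure M {\<omega> \<in> space M. (Y \<omega>, Z \<omega>) \<in> S} \<le> ennreal \<phi> * ennreal \<epsilon>"
proof -
  have rvY: "random_variable N Y" and rvZ: "random_variable K Z"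
    and joint: "distr M N Y \<Otimes>\<^sub>M distr M K Z = distr M (N \<Otimes>\<^sub>M K) (\<lambda>\<omega>. (Y \<omega>, Z \<omega>))"
    using ind indep_var_distribution_eq by auto
  interpret PZ: prob_space "distr M K Z" by (rule prob_space_distr[OF rvZ])
  interpret PY: prob_space "distr M N Y" by (rule prob_space_distr[OF rvY])
  have slice_bound: "emeasure (distr M K Z) (Pair y -` S) \<le> ennreal \<phi> * ennreal \<epsilon>"
    if y: "y \<in> space N" for y
  proof -
    obtain a where a: "\<And>z. z \<in> space K \<Longrightarrow> (y, z) \<in> S \<Longrightarrow> a < h z \<and> h z \<le> a + \<epsilon>"
      using slice[OF y] by blast
    have "emeasure (distr M K Z) (Pair y -` S) = emeasure M (Z -` (Pair y -` S) \<inter> space M)"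
      using sets_Pair1[OF S] rvZ by (simp add: emeasure_distr)
    also have "\<dots> \<le> emeasure M ((\<lambda>\<omega>. h (Z \<omega>)) -` {a<..a + \<epsilon>} \<inter> space M)"
      using a measurable_space[OF rvZ] dens
      by (intro emeasure_mono) (auto simp: distributed_def)
    also have "\<dots> \<le> ennreal \<phi> * emeasure lborel {a<..a + \<epsilon>}"
      using f_le by (intro distributed_emeasure_le[OF dens]) auto
    also have "\<dots> = ennreal \<phi> * ennreal \<epsilon>" using eps by simp
    finally show ?thesis .
  qed
  have "{\<omega> \<in> space M. (Y \<omega>, Z \<omega>) \<in> S} = (\<lambda>\<omega>. (Y \<omega>, Z \<omega>)) -` S \<inter> space M" by auto
  then have "emeasure M {\<omega> \<in> space M. (Y \<omega>, Z \<omega>) \<in> S} =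
        emeasure (distr M (N \<Otimes>\<^sub>M K) (\<lambda>\<omega>. (Y \<omega>, Z \<omega>))) S"
    using S rvY rvZ by (simp add: emeasure_distr)
  also have "\<dots> = (\<integral>\<^sup>+y. emeasure (distr M K Z) (Pair y -` S) \<partial>distr M N Y)"
    using S by (simp add: joint[symmetric] PZ.emeasure_pair_measure_alt)
  also have "\<dots> \<le> (\<integral>\<^sup>+y. ennreal \<phi> * ennreal \<epsilon> \<partial>distr M N Y)"
    using slice_bound by (intro nn_integral_mono) simp
  also have "\<dots> = ennreal \<phi> * ennreal \<epsilon>"
    using PY.emeasure_space_1 by simp
  finally show ?thesis .
qed

lemma measurable_col_weight:
  assumes "\<And>e. (\<lambda>z. W z e) \<in> borel_measurable N"
  shows "(\<lambda>z. col_weight lam c (W z) p) \<in> borel_measurable N"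
  unfolding col_weight_def using assms by (induction p) auto

lemma measurable_pivotal:
  assumes finP: "finite P"
    and R: "\<And>p. (\<lambda>z. R z p) \<in> borel_measurable N" and G: "\<And>p. (\<lambda>z. G z p) \<in> borel_measurable N"
  shows "Measurable.pred N (\<lambda>z. pivotal P e (R z) (G z) r \<epsilon>)"
proof -
  note [measurable] = R G and [simp] = finP
  show ?thesis unfolding pivotal_def green_beats_def by measurable
qed

(* Probability that a red edge e is pivotal: split the red weights into those of the other
   red edges (Y) and that of e (Z), which are independent, and apply the Fubini bound. *)
lemma (in prob_space) pivotal_edge_event:
  fixes X :: "'e \<Rightarrow> 'a \<Rightarrow> real" and g :: "'e \<Rightarrow> real"
    and src tgt :: "'e \<Rightarrow> 'v" and u v :: 'v and r :: real
  assumes finE: "finite E"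
    and indep: "indep_vars (\<lambda>_. borel) X {e \<in> E. lam e = Red}"
    and e: "e \<in> E" "lam e = Red"
    and dens: "distributed M lborel (X e) (\<lambda>x. ennreal (f x))"
    and f_le: "\<And>x. f x \<le> \<phi>"
    and eps: "0 \<le> \<epsilon>"
  defines "B \<equiv> {\<omega> \<in> space M.
             pivotal_edge E src tgt lam u v r \<epsilon> e (\<lambda>e'. if lam e' = Red then X e' \<omega> else g e')}"
  shows "B \<in> events" and "emeasure M B \<le> ennreal \<phi> * ennreal \<epsilon>"
proof -
  define L where "L = {e \<in> E. lam e = Red} - {e}"
  define N :: "('e \<Rightarrow> real) measure" where "N = PiM L (\<lambda>_. borel)"
  define K :: "('e \<Rightarrow> real) measure" where "K = PiM {e} (\<lambda>_. borel)"
  define Y where "Y = (\<lambda>\<omega>. restrict (\<lambda>i. X i \<omega>) L)"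
  define Z where "Z = (\<lambda>\<omega>. restrict (\<lambda>i. X i \<omega>) {e})"
  define base where "base = (\<lambda>y e'. if e' \<in> L then y e' else g e')"
  define V where "V = (\<lambda>y z. (base y)(e := z e))"
  define S where "S = {yz \<in> space (N \<Otimes>\<^sub>M K). pivotal_edge E src tgt lam u v r \<epsilon> e (V (fst yz) (snd yz))}"
  have ind: "indep_var N Y K Z"
    unfolding N_def K_def Y_def Z_def L_def using e by (intro indep_var_restrict[OF indep]) auto
  have X_meas: "X i \<in> borel_measurable M" if "i \<in> {e \<in> E. lam e = Red}" for i
    using indep that unfolding indep_vars_def2 by auto
  have YZ_meas: "(\<lambda>\<omega>. (Y \<omega>, Z \<omega>)) \<in> measurable M (N \<Otimes>\<^sub>M K)"
    unfolding N_def K_def Y_def Z_def L_def using X_meas e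
    by (intro measurable_Pair measurable_restrict) auto
  have V_meas: "(\<lambda>yz. V (fst yz) (snd yz) e') \<in> borel_measurable (N \<Otimes>\<^sub>M K)" for e'
    unfolding V_def base_def N_def K_def by (cases "e' \<in> L"; cases "e' = e") simp_all
  have "Measurable.pred (N \<Otimes>\<^sub>M K) (\<lambda>yz. pivotal_edge E src tgt lam u v r \<epsilon> e (V (fst yz) (snd yz)))"
    by (intro measurable_pivotal finite_paths[OF finE] measurable_col_weight V_meas)
  then have S: "S \<in> sets (N \<Otimes>\<^sub>M K)" unfolding S_def Measurable.pred_def by simp
  have B_eq: "B = {\<omega> \<in> space M. (Y \<omega>, Z \<omega>) \<in> S}"
  proof -
    have "pivotal_edge E src tgt lam u v r \<epsilon> e (\<lambda>e'. if lam e' = Red then X e' \<omega> else g e') \<longleftrightarrow>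
          pivotal_edge E src tgt lam u v r \<epsilon> e (V (Y \<omega>) (Z \<omega>))" for \<omega>
      using e by (intro pivotal_edge_cong) (auto simp: V_def base_def Y_def Z_def L_def)
    moreover have "(Y \<omega>, Z \<omega>) \<in> space (N \<Otimes>\<^sub>M K)" for \<omega>
      unfolding N_def K_def Y_def Z_def by (simp add: space_pair_measure space_PiM)
    ultimately show ?thesis unfolding B_def S_def by auto
  qed
  show "B \<in> events"
    unfolding B_eq using measurable_sets[OF YZ_meas S] by (simp add: vimage_def Int_def conj_commute)
  have slice: "\<exists>a. \<forall>z\<in>space K. (y, z) \<in> S \<longrightarrow> a < z e \<and> z e \<le> a + \<epsilon>" for y
  proof -
    obtain a where "\<forall>x. pivotal_edge E src tgt lam u v r \<epsilon> e ((base y)(e := x)) \<longrightarrow> a < x \<and> x \<le> a + \<epsilon>"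
      using pivotal_edge_slice[where lam = lam and e = e and src = src and tgt = tgt and u = u and v = v
          and r = r and \<epsilon> = \<epsilon> and w = "base y", OF finE e(2)] by blast
    then show ?thesis unfolding S_def V_def by auto
  qed
  have "(\<lambda>\<omega>. Z \<omega> e) = X e" unfolding Z_def by auto
  then show "emeasure M B \<le> ennreal \<phi> * ennreal \<epsilon>"
    unfolding B_eq using indep_slice_bound[OF ind _ f_le S slice eps] dens by simp
qed

lemma (in prob_space) red_edge_event:
  fixes X :: "'e \<Rightarrow> 'a \<Rightarrow> real" and g :: "'e \<Rightarrow> real"
    and src tgt :: "'e \<Rightarrow> 'v" and u v :: 'v and r :: real
  assumes finE: "finite E"
    and indep: "indep_vars (\<lambda>_. borel) X {e \<in> E. lam e = Red}"
    and e: "e \<in> E" "lam e = Red"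
    and dens: "distributed M lborel (X e) (\<lambda>x. ennreal (f x))"
    and f_bound: "\<And>x. 0 \<le> f x \<and> f x \<le> \<phi>"
    and f_supp: "\<And>x. x \<le> 0 \<Longrightarrow> f x = 0"
    and eps: "0 \<le> \<epsilon>"
  defines "C \<equiv> {\<omega> \<in> space M. X e \<omega> \<le> 0 \<or>
             pivotal_edge E src tgt lam u v r \<epsilon> e (\<lambda>e'. if lam e' = Red then X e' \<omega> else g e')}"
  shows "C \<in> events" and "measure M C \<le> \<phi> * \<epsilon>"
proof -
  let ?B = "{\<omega> \<in> space M.
             pivotal_edge E src tgt lam u v r \<epsilon> e (\<lambda>e'. if lam e' = Red then X e' \<omega> else g e')}"
  let ?N = "X e -` {..0} \<inter> space M"
  have f_le: "\<And>x. f x \<le> \<phi>" using f_bound by blast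
  have B: "?B \<in> events" "emeasure M ?B \<le> ennreal \<phi> * ennreal \<epsilon>"
    using pivotal_edge_event[where src = src and tgt = tgt and u = u and v = v and r = r and g = g,
        OF finE indep e dens f_le eps] by blast+
  have X_meas: "X e \<in> borel_measurable M" using dens by (simp add: distributed_def)
  have N: "?N \<in> events" using measurable_sets[OF X_meas] by simp
  have "emeasure M ?N \<le> ennreal 0 * emeasure lborel {..0::real}"
    using f_supp by (intro distributed_emeasure_le[OF dens]) auto
  then have N0: "emeasure M ?N = 0" by simp
  have C_eq: "C = ?N \<union> ?B" unfolding C_def by auto
  show "C \<in> events" unfolding C_eq using N B(1) by blast
  have "emeasure M C \<le> emeasure M ?N + emeasure M ?B"
    unfolding C_eq using N B(1) by (rule emeasure_subadditive)
  also have "\<dots> \<le> ennreal (\<phi> * \<epsilon>)"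
    using B(2) N0 f_bound[of 0] eps by (simp add: ennreal_mult)
  finally show "measure M C \<le> \<phi> * \<epsilon>"
    using f_bound[of 0] eps by (simp add: emeasure_eq_measure ennreal_le_iff)
qed

lemma (in finite_measure) measure_le_sum_cover:
  assumes "finite I" "A \<subseteq> (\<Union>i\<in>I. C i)"
    and "\<And>i. i \<in> I \<Longrightarrow> C i \<in> sets M" "\<And>i. i \<in> I \<Longrightarrow> measure M (C i) \<le> b i"
  shows "measure M A \<le> sum b I"
proof -
  have "measure M A \<le> measure M (\<Union>i\<in>I. C i)"
    using assms(1-3) by (intro finite_measure_mono) auto
  also have "\<dots> \<le> (\<Sum>i\<in>I. measure M (C i))"
    using assms(1,3) by (intro finite_measure_subadditive_finite) auto
  also have "\<dots> \<le> sum b I" using assms(4) by (rule sum_mono)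
  finally show ?thesis .
qed

theorem corollary6:
  fixes E :: "'e set" and src tgt :: "'e \<Rightarrow> 'v" and lam :: "'e \<Rightarrow> colour"
    and u v :: 'v and g :: "'e \<Rightarrow> real"
    and M :: "'m measure" and X :: "'e \<Rightarrow> 'm \<Rightarrow> real"
    and f :: "'e \<Rightarrow> real \<Rightarrow> real" and \<phi> :: "'e \<Rightarrow> real"
    and r \<epsilon> :: real
  assumes finE: "finite E"
    and green_path: "\<exists>p. is_path E src tgt u v p \<and> (\<forall>e\<in>set p. lam e = Green)"
    and red_path: "\<exists>p. is_path E src tgt u v p \<and> (\<forall>e\<in>set p. lam e = Red)"
    and green_pos: "\<forall>e\<in>E. lam e = Green \<longrightarrow> g e > 0"
    and P: "prob_space M"
    and indep: "prob_space.indep_vars M (\<lambda>_. borel) X {e\<in>E. lam e = Red}"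
    and dens: "\<forall>e\<in>E. lam e = Red \<longrightarrow> distributed M lborel (X e) (\<lambda>x. ennreal (f e x))"
    and f_supp: "\<forall>e\<in>E. lam e = Red \<longrightarrow> (\<forall>x. x \<le> 0 \<longrightarrow> f e x = 0)"
    and f_bound: "\<forall>e\<in>E. lam e = Red \<longrightarrow> (\<forall>x. 0 \<le> f e x \<and> f e x \<le> \<phi> e)"
    and phi_pos: "\<forall>e\<in>E. lam e = Red \<longrightarrow> \<phi> e > 0"
    and r_nonneg: "0 \<le> r"
    and eps_pos: "\<epsilon> > 0"
  shows "measure M {\<omega> \<in> space M.
            let w = (\<lambda>e. if lam e = Red then X e \<omega> else g e) in
            r < r_tot E src tgt lam w u v \<and> Delta E src tgt lam w u v r \<le> r + \<epsilon>}
         \<le> (\<Sum>e\<in>{e\<in>E. lam e = Red}. \<phi> e) * \<epsilon>"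
proof -
  interpret prob_space M by (rule P)
  define RE where "RE = {e \<in> E. lam e = Red}"
  define W where "W = (\<lambda>\<omega> e. if lam e = Red then X e \<omega> else g e)"
  define C where "C = (\<lambda>e. {\<omega> \<in> space M. X e \<omega> \<le> 0 \<or> pivotal_edge E src tgt lam u v r \<epsilon> e (W \<omega>)})"
  have C: "C e \<in> events \<and> measure M (C e) \<le> \<phi> e * \<epsilon>" if "e \<in> RE" for e
    using red_edge_event[where src = src and tgt = tgt and u = u and v = v and r = r and g = g
        and e = e and f = "f e" and \<phi> = "\<phi> e" and \<epsilon> = \<epsilon>, OF finE indep] that dens f_bound f_supp eps_pos
    unfolding C_def W_def RE_def by auto
  have "{\<omega> \<in> space M. let w = W \<omega> in r < r_tot E src tgt lam w u v \<and> Delta E src tgt lam w u v r \<le> r + \<epsilon>}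
        \<subseteq> (\<Union>e\<in>RE. C e)"
  proof clarify
    fix \<omega> assume "\<omega> \<in> space M"
      and "let w = W \<omega> in r < r_tot E src tgt lam w u v \<and> Delta E src tgt lam w u v r \<le> r + \<epsilon>"
    then show "\<omega> \<in> (\<Union>e\<in>RE. C e)"
      using red_edge_nonpos_or_pivotal[where x = "\<lambda>e. X e \<omega>", OF finE green_path red_path green_pos r_nonneg]
      unfolding C_def RE_def W_def Let_def by blast
  qed
  from measure_le_sum_cover[OF _ this] C finE show ?thesis
    unfolding W_def RE_def by (simp add: sum_distrib_right)
qed

end
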